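(* Let $f$ be a Bernstein function, $\alpha\in(0,1)$, $\beta\in(1,1/\alpha]$, $\theta\in(0,\pi/2)$ and $\lambda\in\Sigma_\theta$. Define $g,h:\mathbb{C}_+\to\mathbb{C}$ by $g(z)=f(z^\alpha)^\beta$ and $h(z)=\frac{1}{\lambda+g(z)}$. Then $h\in\mathcal{B}$ and $\|h\|_{\mathcal{B}}\le C|\lambda|^{-1}$, where \[C=2\beta\sec(\alpha\pi/2)\sec^2\big((\alpha\beta\pi/2+\theta)/2\big).\]
   Context: $\mathbb{C}_+=\{\Re z>0\}$, $\Sigma_\theta=\{z\ne0:|\arg z|<\theta\}$; powers use principal branches. A Bernstein function is $f(z)=a+bz+\int_{(0,\infty)}(1-e^{-zs})\,d\mu(s)$ on $\mathbb{C}_+$, with $a,b\ge0$ and $\mu$ a positive Borel measure on $(0,\infty)$ with $\int\frac{s}{1+s}d\mu(s)<\infty$ (it maps $\mathbb{C}_+$ into $\mathbb{C}_+$). $\mathcal{B}$ is the space of holomorphic $f$ on $\mathbb{C}_+$ with $\int_0^\infty\sup_{y}|f'(x+iy)|dx<\infty$, normed by $\|f\|_{\mathcal{B}}=\sup_{\mathbb{C}_+}|f|+\int_0^\infty\sup_{y\in\mathbb{R}}|f'(x+iy)|\,dx$. *)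

theory Defs
  imports "HOL-Complex_Analysis.Complex_Analysis"
begin

definition bernstein :: "(complex \<Rightarrow> complex) \<Rightarrow> bool" where
  "bernstein f \<longleftrightarrow> (\<exists>(a::real) (b::real) (\<mu>::real measure).
      a \<ge> 0 \<and> b \<ge> 0 \<and> sets \<mu> = sets borel \<and>
      (\<integral>\<^sup>+ s. ennreal (s / (1 + s)) * indicator {0<..} s \<partial>\<mu>) < \<infinity> \<and>
      (\<forall>z. Re z > 0 \<longrightarrow>
         f z = complex_of_real a + complex_of_real b * z
               + (LINT s:{0<..}|\<mu>. (1 - exp (- (z * complex_of_real s))))))"

definition B_int :: "(complex \<Rightarrow> complex) \<Rightarrow> ennreal" where
  "B_int h = (\<integral>\<^sup>+ x. (SUP y::real. ennreal (norm (deriv h (Complex x y))))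
                       * indicator {0<..} x \<partial>lborel)"

definition in_B :: "(complex \<Rightarrow> complex) \<Rightarrow> bool" where
  "in_B h \<longleftrightarrow> h holomorphic_on {z. Re z > 0} \<and> B_int h < \<infinity>"

definition B_norm :: "(complex \<Rightarrow> complex) \<Rightarrow> ennreal" where
  "B_norm h = (SUP z\<in>{z. Re z > 0}. ennreal (norm (h z))) + B_int h"

end

theory Submission
  imports Defs
begin

text \<open>
  Let \<open>F\<close> be the Bernstein function and \<open>Z = z\<^sup>\<alpha>\<close>. The map \<open>z \<mapsto> Z\<close> sends the right
  half-plane into the sector \<open>\<bar>arg\<bar> \<le> \<alpha>pi/2\<close>, and \<open>F\<close> preserves such sectors because every
  \<open>1 - exp (-zs)\<close> does. Hence \<open>F(Z)\<^sup>\<beta>\<close> lies in the sector of half-angle \<open>\<gamma> = \<alpha>\<beta>pi/2 \<le> pi/2\<close>,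
  its angle with \<open>l\<close> is at most \<open>\<gamma> + \<theta> < pi\<close>, and the law of cosines gives
  \<open>\<bar>l + F(Z)\<^sup>\<beta>\<bar> \<ge> c (\<bar>l\<bar> + \<bar>F(Z)\<bar>\<^sup>\<beta>)\<close> with \<open>c = cos ((\<gamma> + \<theta>)/2)\<close>; so \<open>\<bar>h\<bar> \<le> 1/(c\<bar>l\<bar>)\<close>.

  On the positive axis \<open>F\<close> increases and \<open>F'\<close> decreases, which gives \<open>Re F(Z) \<ge> F(\<kappa>x\<^sup>\<alpha>)\<close> and
  \<open>\<bar>F'(Z)\<bar> \<le> F'(\<kappa>x\<^sup>\<alpha>)\<close> for \<open>x = Re z\<close> and \<open>\<kappa> = cos (\<alpha>pi/2)\<close>. Therefore \<open>\<bar>h'(x + iy)\<bar>\<close> is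
  bounded, uniformly in \<open>y\<close>, by \<open>K \<Psi>'(x) (\<bar>l\<bar> + \<Psi>(x)\<^sup>\<beta>)\<^bsup>-1-1/\<beta>\<^esup>\<close> with \<open>\<Psi>(x) = F(\<kappa>x\<^sup>\<alpha>)\<close>
  and \<open>K = \<beta>/(\<kappa>c\<^sup>2)\<close>. This bound is the derivative of \<open>K/\<bar>l\<bar> \<cdot> \<Psi> (\<bar>l\<bar> + \<Psi>\<^sup>\<beta>)\<^bsup>-1/\<beta>\<^esup>\<close>, which
  takes values in \<open>[0, K/\<bar>l\<bar>]\<close>, so its integral over \<open>x > 0\<close> is at most \<open>K/\<bar>l\<bar>\<close>. Since
  \<open>\<kappa>c \<le> 1 < \<beta>\<close>, the two bounds add up to at most \<open>2K/\<bar>l\<bar>\<close>. If \<open>F\<close> vanishes identically,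
  \<open>h\<close> is constant.
\<close>

section \<open>Exponential estimates\<close>

lemma norm_exp_minus_diff_le:
  fixes u v :: complex and s c :: real
  assumes s: "0 \<le> s" and u: "c \<le> Re u" and v: "c \<le> Re v"
  shows "norm (exp (- (u * of_real s)) - exp (- (v * of_real s))) \<le> s * exp (- (c * s)) * norm (u - v)"
proof (rule field_differentiable_bound[where f="\<lambda>z. exp (- (z * of_real s))"
      and f'="\<lambda>z. - (of_real s * exp (- (z * of_real s)))" and S="{z. c \<le> Re z}"])
  show "convex {z. c \<le> Re z}" by (rule convex_halfspace_Re_ge)
  fix z assume z: "z \<in> {z. c \<le> Re z}"
  show "((\<lambda>z. exp (- (z * of_real s))) has_field_derivative - (of_real s * exp (- (z * of_real s))))
      (at z within {z. c \<le> Re z})"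
    by (auto intro!: derivative_eq_intros)
  have "norm (- (of_real s * exp (- (z * of_real s)))) = s * exp (- (Re z * s))"
    using s by (simp add: norm_mult norm_exp_eq_Re)
  also have "\<dots> \<le> s * exp (- (c * s))"
    using z s by (intro mult_left_mono) (auto intro: mult_right_mono)
  finally show "norm (- (of_real s * exp (- (z * of_real s)))) \<le> s * exp (- (c * s))" .
qed (use u v in auto)

lemma norm_one_minus_exp_le:
  fixes u :: complex
  assumes "0 \<le> Re u"
  shows "norm (1 - exp (- u)) \<le> norm u"
  using norm_exp_minus_diff_le[of 1 0 u 0] assms by (simp add: norm_minus_commute)

lemma norm_one_minus_exp_le_2:
  fixes u :: complex
  assumes "0 \<le> Re u"
  shows "norm (1 - exp (- u)) \<le> 2"
proof -
  have "norm (1 - exp (- u)) \<le> norm (1 :: complex) + norm (exp (- u))"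
    by (rule norm_triangle_ineq4)
  also have "norm (exp (- u)) \<le> 1" using assms by (simp add: norm_exp_eq_Re)
  finally show ?thesis by simp
qed

lemma mult_exp_minus_le:
  fixes s k :: real
  assumes "0 \<le> s" "0 < k"
  shows "s * exp (- (k * s)) \<le> (1 + 1 / k) * (s / (1 + s))"
proof -
  have e: "exp (- (k * s)) \<le> 1" using assms by simp
  have "1 + k * s \<le> exp (k * s)" by (rule exp_ge_add_one_self)
  then have "k * s \<le> exp (k * s)" by linarith
  then have "k * s * exp (- (k * s)) \<le> 1" by (simp add: exp_minus field_simps)
  then have e2: "s * exp (- (k * s)) \<le> 1 / k" using assms by (simp add: field_simps)
  have "s * exp (- (k * s)) * (1 + s) = s * exp (- (k * s)) + s * (s * exp (- (k * s)))"
    by (simp add: algebra_simps)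
  also have "\<dots> \<le> s + s * (1 / k)"
    using mult_left_mono[OF e, of s] mult_left_mono[OF e2, of s] assms by (intro add_mono) simp_all
  also have "\<dots> = (1 + 1 / k) * s" by (simp add: algebra_simps)
  finally show ?thesis using assms by (simp add: pos_le_divide_eq)
qed

lemma norm_one_minus_exp_le_weight:
  fixes w :: complex and s :: real
  assumes "0 \<le> Re w" "0 < s"
  shows "norm (1 - exp (- (w * of_real s))) \<le> 2 * (2 + norm w) * (s / (1 + s))"
proof (cases "s \<le> 1")
  case True
  have "norm (1 - exp (- (w * of_real s))) \<le> norm w * s"
    using norm_one_minus_exp_le[of "w * of_real s"] assms by (simp add: norm_mult)
  also have "\<dots> \<le> (2 + norm w) * s" using assms by (intro mult_right_mono) auto
  also have "\<dots> \<le> 2 * (2 + norm w) * (s / (1 + s))"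
  proof -
    have "(2 + norm w) * s * (1 + s) \<le> (2 + norm w) * s * 2"
      by (rule mult_left_mono) (use True assms in auto)
    then show ?thesis using assms by (simp add: field_simps)
  qed
  finally show ?thesis .
next
  case False
  have "1 \<le> 2 * (s / (1 + s))" using False by (simp add: field_simps)
  have "norm (1 - exp (- (w * of_real s))) \<le> 2 * 1"
    using norm_one_minus_exp_le_2[of "w * of_real s"] assms by simp
  also have "\<dots> \<le> (2 + norm w) * (2 * (s / (1 + s)))"
    using \<open>1 \<le> 2 * (s / (1 + s))\<close> by (intro mult_mono) auto
  finally show ?thesis by (simp only: ac_simps)
qed

section \<open>Sectors and complex powers\<close>

text \<open>For \<open>0 \<le> \<phi> \<le> pi/2\<close> this is the sector \<open>\<bar>Arg v\<bar> \<le> \<phi>\<close> together with \<open>0\<close>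
  (\<open>in_closed_sector_iff_Arg\<close>); the linear description makes it a convex cone that is
  closed under integration.\<close>
definition closed_sector :: "real \<Rightarrow> complex set" where
  "closed_sector \<phi> = {v. 0 \<le> Re v \<and> cos \<phi> * \<bar>Im v\<bar> \<le> sin \<phi> * Re v}"

lemma add_in_closed_sector:
  assumes "0 \<le> cos \<phi>" "u \<in> closed_sector \<phi>" "v \<in> closed_sector \<phi>"
  shows "u + v \<in> closed_sector \<phi>"
proof -
  have "cos \<phi> * \<bar>Im (u + v)\<bar> \<le> cos \<phi> * \<bar>Im u\<bar> + cos \<phi> * \<bar>Im v\<bar>"
    using assms(1) by (simp add: distrib_left[symmetric] mult_left_mono)
  with assms show ?thesis by (auto simp: closed_sector_def algebra_simps)
qed

lemma of_real_mult_in_closed_sector: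
  assumes "0 \<le> c" "v \<in> closed_sector \<phi>"
  shows "of_real c * v \<in> closed_sector \<phi>"
proof -
  have "c * (cos \<phi> * \<bar>Im v\<bar>) \<le> c * (sin \<phi> * Re v)"
    using assms by (intro mult_left_mono) (auto simp: closed_sector_def)
  with assms show ?thesis by (auto simp: closed_sector_def abs_mult algebra_simps)
qed

lemma of_real_in_closed_sector: "0 \<le> c \<Longrightarrow> 0 \<le> sin \<phi> \<Longrightarrow> of_real c \<in> closed_sector \<phi>"
  by (simp add: closed_sector_def)

lemma integral_in_closed_sector:
  fixes g :: "'a \<Rightarrow> complex"
  assumes "integrable M g" "\<And>s. g s \<in> closed_sector \<phi>" "0 \<le> cos \<phi>"
  shows "integral\<^sup>L M g \<in> closed_sector \<phi>"
proof -
  have "0 \<le> (\<integral>s. Re (g s) \<partial>M)"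
    using assms(2) by (intro integral_nonneg_AE) (auto simp: closed_sector_def)
  moreover have "cos \<phi> * \<bar>\<integral>s. Im (g s) \<partial>M\<bar> \<le> sin \<phi> * (\<integral>s. Re (g s) \<partial>M)"
  proof -
    have "cos \<phi> * \<bar>\<integral>s. Im (g s) \<partial>M\<bar> \<le> cos \<phi> * (\<integral>s. \<bar>Im (g s)\<bar> \<partial>M)"
      using assms(3) integral_abs_bound by (rule mult_left_mono[rotated])
    also have "\<dots> = (\<integral>s. cos \<phi> * \<bar>Im (g s)\<bar> \<partial>M)" by simp
    also have "\<dots> \<le> (\<integral>s. sin \<phi> * Re (g s) \<partial>M)"
      using assms(1,2) by (intro integral_mono) (auto simp: closed_sector_def)
    also have "\<dots> = sin \<phi> * (\<integral>s. Re (g s) \<partial>M)" by simp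
    finally show ?thesis .
  qed
  ultimately show ?thesis using assms(1) by (simp add: closed_sector_def)
qed

lemma one_minus_exp_in_closed_sector:
  assumes u: "u \<in> closed_sector \<phi>" and "0 \<le> cos \<phi>" "0 \<le> sin \<phi>"
  shows "1 - exp (- u) \<in> closed_sector \<phi>"
proof -
  define x y where "x = Re u" and "y = Im u"
  have x: "0 \<le> x" and xy: "cos \<phi> * \<bar>y\<bar> \<le> sin \<phi> * x"
    using u by (auto simp: closed_sector_def x_def y_def)
  have "exp (- x) * cos y \<le> exp (- x) * 1" by (rule mult_left_mono) auto
  also have "\<dots> \<le> 1" using x by simp
  finally have re: "exp (- x) * cos y \<le> 1" .
  have "cos \<phi> * \<bar>sin y\<bar> \<le> cos \<phi> * \<bar>y\<bar>"
    using assms(2) abs_sin_x_le_abs_x by (rule mult_left_mono[rotated])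
  also have "\<dots> \<le> sin \<phi> * x" by (fact xy)
  also have "\<dots> \<le> sin \<phi> * (exp x - cos y)"
    using exp_ge_add_one_self[of x] cos_le_one[of y] assms(3) by (intro mult_left_mono) linarith+
  finally have "exp (- x) * (cos \<phi> * \<bar>sin y\<bar>) \<le> exp (- x) * (sin \<phi> * (exp x - cos y))"
    by (rule mult_left_mono) simp
  also have "exp (- x) * (sin \<phi> * (exp x - cos y)) = sin \<phi> * (1 - exp (- x) * cos y)"
    by (simp add: algebra_simps exp_minus)
  finally have "cos \<phi> * (exp (- x) * \<bar>sin y\<bar>) \<le> sin \<phi> * (1 - exp (- x) * cos y)"
    by (simp add: algebra_simps)
  with re show ?thesis by (simp add: closed_sector_def Re_exp Im_exp abs_mult x_def y_def)
qed

lemma Re_Im_eq_norm_Arg: "Re v = norm v * cos (Arg v)" "Im v = norm v * sin (Arg v)"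
  by (metis Re_rcis rcis_cmod_Arg) (metis Im_rcis rcis_cmod_Arg)

lemma in_closed_sector_iff_Arg:
  assumes "0 \<le> \<phi>" "\<phi> \<le> pi / 2" "v \<noteq> 0"
  shows "v \<in> closed_sector \<phi> \<longleftrightarrow> \<bar>Arg v\<bar> \<le> \<phi>"
proof -
  define t where "t = \<bar>Arg v\<bar>"
  have t: "0 \<le> t" "t \<le> pi" using mpi_less_Arg[of v] Arg_le_pi[of v] by (auto simp: t_def)
  have cos_t: "cos (Arg v) = cos t" by (simp add: t_def)
  have sin_t: "\<bar>sin (Arg v)\<bar> = sin t"
    using t sin_ge_zero[of t] by (cases "Arg v \<ge> 0") (auto simp: t_def)
  have "v \<in> closed_sector \<phi> \<longleftrightarrow>
      0 \<le> norm v * cos t \<and> norm v * (cos \<phi> * sin t) \<le> norm v * (sin \<phi> * cos t)"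
    by (simp add: closed_sector_def Re_Im_eq_norm_Arg[of v] abs_mult cos_t sin_t ac_simps)
  also have "\<dots> \<longleftrightarrow> 0 \<le> cos t \<and> 0 \<le> sin (\<phi> - t)"
    using assms by (simp add: zero_le_mult_iff sin_diff algebra_simps)
  also have "\<dots> \<longleftrightarrow> t \<le> \<phi>"
  proof
    assume h: "0 \<le> cos t \<and> 0 \<le> sin (\<phi> - t)"
    show "t \<le> \<phi>"
    proof (rule ccontr)
      assume "\<not> t \<le> \<phi>"
      moreover have "t \<le> pi / 2"
        using h t cos_lt_zero_pi[of t] by (cases "t \<le> pi / 2") auto
      ultimately have "0 < sin (t - \<phi>)"
        using assms by (intro sin_gt_zero) auto
      then have "sin (\<phi> - t) < 0"
        using sin_minus[of "t - \<phi>"] by simp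
      with h show False by simp
    qed
  qed (use t assms in \<open>auto intro: cos_ge_zero sin_ge_zero\<close>)
  finally show ?thesis by (simp add: t_def)
qed

lemma Arg_powr_of_real:
  fixes z :: complex and c :: real
  assumes "z \<noteq> 0" "- pi < c * Arg z" "c * Arg z \<le> pi"
  shows "Arg (z powr of_real c) = c * Arg z"
proof -
  have Im_eq: "Im (of_real c * Ln z) = c * Arg z" by (simp add: Arg_eq_Im_Ln[OF assms(1)])
  have "Arg (z powr of_real c) = Arg (exp (of_real c * Ln z))" using assms by (simp add: powr_def)
  also have "\<dots> = Im (of_real c * Ln z)" using assms by (intro Arg_exp) (simp_all only: Im_eq)
  finally show ?thesis by (simp only: Im_eq)
qed

lemma abs_Arg_powr_le:
  fixes z :: complex and \<alpha> :: real
  assumes z: "0 < Re z" and \<alpha>: "0 \<le> \<alpha>" "\<alpha> \<le> 1"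
  shows "\<bar>Arg (z powr of_real \<alpha>)\<bar> \<le> \<alpha> * pi / 2"
proof -
  have "\<bar>Arg z\<bar> < pi / 2" using z Arg_Re_pos[of z] by blast
  then have "\<alpha> * \<bar>Arg z\<bar> \<le> \<alpha> * (pi / 2)" using \<alpha> by (intro mult_left_mono) auto
  then have "\<bar>\<alpha> * Arg z\<bar> \<le> \<alpha> * pi / 2" using \<alpha> by (simp add: abs_mult)
  moreover have "\<alpha> * (pi / 2) \<le> pi / 2" using \<alpha> by (intro mult_left_le_one_le) auto
  then have "\<alpha> * pi / 2 < pi" by simp
  ultimately have "- pi < \<alpha> * Arg z" "\<alpha> * Arg z \<le> pi"
    unfolding abs_le_iff by linarith+
  then have "Arg (z powr of_real \<alpha>) = \<alpha> * Arg z"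
    using z by (intro Arg_powr_of_real) auto
  with \<open>\<bar>\<alpha> * Arg z\<bar> \<le> \<alpha> * pi / 2\<close> show ?thesis by simp
qed

lemma Re_powr_ge:
  fixes z :: complex and \<alpha> :: real
  assumes z: "0 < Re z" and \<alpha>: "0 \<le> \<alpha>" "\<alpha> \<le> 1"
  shows "cos (\<alpha> * pi / 2) * Re z powr \<alpha> \<le> Re (z powr of_real \<alpha>)"
proof -
  have Arg: "\<bar>Arg (z powr of_real \<alpha>)\<bar> \<le> \<alpha> * pi / 2"
    by (rule abs_Arg_powr_le[OF assms])
  have "\<alpha> * pi / 2 \<le> pi / 2" using \<alpha> by (simp add: mult_left_le_one_le)
  then have cos_le: "cos (\<alpha> * pi / 2) \<le> cos (Arg (z powr of_real \<alpha>))"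
    using Arg cos_monotone_0_pi_le[of "\<bar>Arg (z powr of_real \<alpha>)\<bar>" "\<alpha> * pi / 2"] by simp
  have cos_nonneg: "0 \<le> cos (\<alpha> * pi / 2)"
    using \<open>\<alpha> * pi / 2 \<le> pi / 2\<close> mult_nonneg_nonneg[OF \<alpha>(1) pi_ge_zero]
    by (intro cos_ge_zero) linarith+
  have "Re z powr \<alpha> \<le> norm z powr \<alpha>"
    using z \<alpha> complex_Re_le_cmod[of z] by (intro powr_mono2) auto
  then have "cos (\<alpha> * pi / 2) * Re z powr \<alpha> \<le> cos (\<alpha> * pi / 2) * norm z powr \<alpha>"
    using cos_nonneg by (rule mult_left_mono)
  also have "\<dots> \<le> cos (Arg (z powr of_real \<alpha>)) * norm z powr \<alpha>"
    using cos_le by (rule mult_right_mono) simp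
  also have "\<dots> = Re (z powr of_real \<alpha>)"
    using Re_Im_eq_norm_Arg(1)[of "z powr of_real \<alpha>"] by (simp add: norm_powr_real_powr')
  finally show ?thesis .
qed

lemma norm_powr_le_Re_powr:
  fixes z :: complex and \<alpha> :: real
  assumes "0 < Re z" "\<alpha> \<le> 1"
  shows "norm (z powr (of_real \<alpha> - 1)) \<le> Re z powr (\<alpha> - 1)"
proof -
  have "norm (z powr (of_real \<alpha> - 1)) = norm z powr (\<alpha> - 1)"
    by (subst norm_powr_real_powr') auto
  also have "\<dots> \<le> Re z powr (\<alpha> - 1)"
    using assms complex_Re_le_cmod[of z] by (intro powr_mono2') auto
  finally show ?thesis .
qed

lemma norm_add_ge_cos_half_angle:
  fixes l g :: complex and \<theta> \<gamma> :: real
  assumes l: "\<bar>Arg l\<bar> \<le> \<theta>" and g: "\<bar>Arg g\<bar> \<le> \<gamma>" and "0 \<le> \<theta> + \<gamma>" "\<theta> + \<gamma> \<le> pi"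
  shows "cos ((\<theta> + \<gamma>) / 2) * (norm l + norm g) \<le> norm (l + g)"
proof -
  define c where "c = cos ((\<theta> + \<gamma>) / 2)"
  define p q A B where "p = norm l" "q = norm g" "A = Arg l" "B = Arg g"
  have c: "0 \<le> c" "c \<le> 1" unfolding c_def using assms(3,4) by (auto intro: cos_ge_zero)
  have pq: "0 \<le> p" "0 \<le> q" by (auto simp: p_q_A_B_def)
  have "\<bar>A - B\<bar> \<le> \<theta> + \<gamma>" using l g by (auto simp: p_q_A_B_def)
  then have "cos (\<theta> + \<gamma>) \<le> cos \<bar>A - B\<bar>"
    using assms(3,4) by (subst cos_mono_le_eq) auto
  moreover have "cos (\<theta> + \<gamma>) = 2 * c\<^sup>2 - 1"
    unfolding c_def by (metis cos_double_cos mult_2 field_sum_of_halves)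
  ultimately have cos_AB: "2 * c\<^sup>2 - 1 \<le> cos (A - B)" by simp
  have "(norm (l + g))\<^sup>2 = (p * cos A + q * cos B)\<^sup>2 + (p * sin A + q * sin B)\<^sup>2"
    by (simp add: cmod_power2 Re_Im_eq_norm_Arg[of l] Re_Im_eq_norm_Arg[of g] p_q_A_B_def)
  also have "\<dots> = p\<^sup>2 + q\<^sup>2 + 2 * p * q * cos (A - B)"
  proof -
    have "sin A ^ 2 + cos A ^ 2 = 1" "sin B ^ 2 + cos B ^ 2 = 1" by simp_all
    then show ?thesis unfolding cos_diff by algebra
  qed
  finally have norm_sq: "(norm (l + g))\<^sup>2 = p\<^sup>2 + q\<^sup>2 + 2 * p * q * cos (A - B)" .
  have "(c * (p + q))\<^sup>2 = p\<^sup>2 + q\<^sup>2 + 2 * p * q * (2 * c\<^sup>2 - 1) - (1 - c\<^sup>2) * (p - q)\<^sup>2"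
    by (simp add: power2_eq_square algebra_simps)
  also have "\<dots> \<le> p\<^sup>2 + q\<^sup>2 + 2 * p * q * (2 * c\<^sup>2 - 1)"
    using c by (simp add: power_le_one)
  also have "\<dots> \<le> (norm (l + g))\<^sup>2"
    unfolding norm_sq using cos_AB pq by (intro add_left_mono mult_left_mono) auto
  finally have "c * (p + q) \<le> norm (l + g)" by (rule power2_le_imp_le) simp
  then show ?thesis by (simp add: c_def p_q_A_B_def)
qed

section \<open>Bernstein functions\<close>

lemma tendsto_integral_dominated_at_within:
  fixes f :: "'a::first_countable_topology \<Rightarrow> 'b \<Rightarrow> 'c::{banach, second_countable_topology}"
  assumes "\<And>y. f y \<in> borel_measurable M" "g \<in> borel_measurable M" "integrable M w"
    and lim: "AE s in M. ((\<lambda>y. f y s) \<longlongrightarrow> g s) (at x within S)"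
    and bound: "\<And>y. y \<in> S - {x} \<Longrightarrow> AE s in M. norm (f y s) \<le> w s"
  shows "((\<lambda>y. integral\<^sup>L M (f y)) \<longlongrightarrow> integral\<^sup>L M g) (at x within S)"
proof (subst tendsto_at_iff_sequentially, intro allI impI)
  fix X assume X: "\<forall>i. X i \<in> S - {x}" and "X \<longlonglongrightarrow> x"
  then have X_at: "filterlim X (at x within S) sequentially"
    by (simp add: filterlim_at)
  have "(\<lambda>i. integral\<^sup>L M (f (X i))) \<longlonglongrightarrow> integral\<^sup>L M g"
  proof (rule integral_dominated_convergence)
    show "AE s in M. (\<lambda>i. f (X i) s) \<longlonglongrightarrow> g s"
      using lim by eventually_elim (rule filterlim_compose[OF _ X_at])
    show "AE s in M. norm (f (X i) s) \<le> w s" for i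
      using X by (intro bound) auto
  qed (use assms in auto)
  then show "((\<lambda>y. integral\<^sup>L M (f y)) \<circ> X) \<longlonglongrightarrow> integral\<^sup>L M g"
    by (simp add: comp_def)
qed

locale bernstein_repr =
  fixes a b :: real and \<mu> :: "real measure"
  assumes a_nonneg: "0 \<le> a" and b_nonneg: "0 \<le> b"
    and sets_\<mu> [measurable_cong]: "sets \<mu> = sets borel"
    and finite_weight: "(\<integral>\<^sup>+ s. ennreal (s / (1 + s)) * indicator {0<..} s \<partial>\<mu>) < \<infinity>"
begin

definition weight :: "real \<Rightarrow> real" where
  "weight s = indicator {0<..} s * (s / (1 + s))"

definition kernel :: "complex \<Rightarrow> real \<Rightarrow> complex" where
  "kernel w s = indicator {0<..} s *\<^sub>R (1 - exp (- (w * of_real s)))"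

definition kernel' :: "complex \<Rightarrow> real \<Rightarrow> complex" where
  "kernel' w s = indicator {0<..} s *\<^sub>R (of_real s * exp (- (w * of_real s)))"

definition F :: "complex \<Rightarrow> complex" where
  "F w = of_real a + of_real b * w + integral\<^sup>L \<mu> (kernel w)"

definition F' :: "complex \<Rightarrow> complex" where
  "F' w = of_real b + integral\<^sup>L \<mu> (kernel' w)"

definition Fr :: "real \<Rightarrow> real" where
  "Fr t = Re (F (of_real t))"

definition Fr' :: "real \<Rightarrow> real" where
  "Fr' t = Re (F' (of_real t))"

lemma F_eq_set_integral:
  "F w = of_real a + of_real b * w + (LINT s:{0<..}|\<mu>. (1 - exp (- (w * of_real s))))"
  by (simp add: F_def kernel_def[abs_def] set_lebesgue_integral_def)

lemma weight_measurable [measurable]: "weight \<in> borel_measurable \<mu>"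
  unfolding weight_def by measurable

lemma kernel_measurable [measurable]: "kernel w \<in> borel_measurable \<mu>"
  unfolding kernel_def by measurable

lemma kernel'_measurable [measurable]: "kernel' w \<in> borel_measurable \<mu>"
  unfolding kernel'_def by measurable

lemma weight_nonneg: "0 \<le> weight s"
  by (simp add: weight_def indicator_def)

lemma integrable_weight: "integrable \<mu> weight"
proof (rule integrableI_nonneg)
  have "(\<integral>\<^sup>+ s. ennreal (weight s) \<partial>\<mu>) = (\<integral>\<^sup>+ s. ennreal (s / (1 + s)) * indicator {0<..} s \<partial>\<mu>)"
    by (intro nn_integral_cong) (auto simp: weight_def indicator_def)
  with finite_weight show "(\<integral>\<^sup>+ s. ennreal (weight s) \<partial>\<mu>) < \<infinity>" by simp
qed (auto simp: weight_nonneg)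

lemma norm_kernel_le: "0 \<le> Re w \<Longrightarrow> norm (kernel w s) \<le> 2 * (2 + norm w) * weight s"
  using norm_one_minus_exp_le_weight[of w s] by (auto simp: kernel_def weight_def indicator_def)

lemma integrable_kernel:
  assumes "0 \<le> Re w"
  shows "integrable \<mu> (kernel w)"
proof (rule Bochner_Integration.integrable_bound)
  show "integrable \<mu> (\<lambda>s. 2 * (2 + norm w) * weight s)"
    using integrable_weight by simp
  have "norm (kernel w s) \<le> norm (2 * (2 + norm w) * weight s)" for s
    using norm_kernel_le[OF assms, of s] weight_nonneg[of s] by simp
  then show "AE s in \<mu>. norm (kernel w s) \<le> norm (2 * (2 + norm w) * weight s)"
    by simp
qed simp

lemma norm_kernel'_le:
  assumes "0 < c" "c \<le> Re w"
  shows "norm (kernel' w s) \<le> (1 + 1 / c) * weight s"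
proof (cases "0 < s")
  case True
  have "norm (kernel' w s) = s * exp (- (Re w * s))"
    using True by (simp add: kernel'_def norm_mult norm_exp_eq_Re)
  also have "\<dots> \<le> s * exp (- (c * s))"
    using True assms by (intro mult_left_mono) (auto intro: mult_right_mono)
  also have "\<dots> \<le> (1 + 1 / c) * (s / (1 + s))"
    using mult_exp_minus_le[of s c] True assms by simp
  finally show ?thesis using True by (simp add: weight_def)
qed (simp add: kernel'_def weight_def)

lemma integrable_kernel':
  assumes "0 < Re w"
  shows "integrable \<mu> (kernel' w)"
proof (rule Bochner_Integration.integrable_bound)
  show "integrable \<mu> (\<lambda>s. (1 + 1 / Re w) * weight s)"
    using integrable_weight by simp
  have "norm (kernel' w s) \<le> norm ((1 + 1 / Re w) * weight s)" for s
    using norm_kernel'_le[OF assms order.refl, of s] weight_nonneg[of s] assms by simp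
  then show "AE s in \<mu>. norm (kernel' w s) \<le> norm ((1 + 1 / Re w) * weight s)"
    by simp
qed simp

lemma norm_kernel_diff_quotient_le:
  assumes "0 < c" "c \<le> Re w" "c \<le> Re y" "y \<noteq> w"
  shows "norm ((kernel y s - kernel w s) / (y - w)) \<le> (1 + 1 / c) * weight s"
proof (cases "0 < s")
  case True
  have "norm (kernel y s - kernel w s) = norm (exp (- (w * of_real s)) - exp (- (y * of_real s)))"
    using True by (simp add: kernel_def norm_minus_commute)
  also have "\<dots> \<le> s * exp (- (c * s)) * norm (w - y)"
    using True assms by (intro norm_exp_minus_diff_le) auto
  finally have "norm ((kernel y s - kernel w s) / (y - w)) \<le> s * exp (- (c * s))"
    using assms by (simp add: norm_divide norm_minus_commute divide_le_eq)
  also have "\<dots> \<le> (1 + 1 / c) * (s / (1 + s))"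
    using mult_exp_minus_le[of s c] True assms by simp
  finally show ?thesis using True by (simp add: weight_def)
qed (simp add: kernel_def weight_def)

lemma kernel_diff_quotient_tendsto:
  "((\<lambda>y. (kernel y s - kernel w s) / (y - w)) \<longlongrightarrow> kernel' w s) (at w)"
proof (cases "0 < s")
  case True
  have "((\<lambda>y. - exp (- (y * of_real s))) has_field_derivative of_real s * exp (- (w * of_real s))) (at w)"
    by (auto intro!: derivative_eq_intros)
  then show ?thesis
    using True by (simp add: has_field_derivative_iff kernel_def kernel'_def algebra_simps)
qed (simp add: kernel_def kernel'_def)

lemma has_field_derivative_integral_kernel:
  assumes w: "0 < Re w"
  shows "((\<lambda>y. integral\<^sup>L \<mu> (kernel y)) has_field_derivative integral\<^sup>L \<mu> (kernel' w)) (at w)"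
proof -
  define r where "r = Re w / 2"
  have r: "0 < r" using w by (simp add: r_def)
  have Re_ge: "r \<le> Re y" if "y \<in> ball w r" for y
  proof -
    have "\<bar>Re y - Re w\<bar> \<le> norm (y - w)" using abs_Re_le_cmod[of "y - w"] by simp
    also have "\<dots> < r" using that by (simp add: dist_norm norm_minus_commute)
    finally show ?thesis unfolding r_def by linarith
  qed
  have "((\<lambda>y. integral\<^sup>L \<mu> (\<lambda>s. (kernel y s - kernel w s) / (y - w))) \<longlongrightarrow> integral\<^sup>L \<mu> (kernel' w))
      (at w within ball w r)"
  proof (rule tendsto_integral_dominated_at_within[where w = "\<lambda>s. (1 + 1 / r) * weight s"])
    show "AE s in \<mu>. ((\<lambda>y. (kernel y s - kernel w s) / (y - w)) \<longlongrightarrow> kernel' w s) (at w within ball w r)"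
      by (intro AE_I2 tendsto_within_subset[OF kernel_diff_quotient_tendsto]) simp
    show "AE s in \<mu>. norm ((kernel y s - kernel w s) / (y - w)) \<le> (1 + 1 / r) * weight s"
      if "y \<in> ball w r - {w}" for y
      using that r Re_ge[of y] Re_ge[of w] by (intro AE_I2 norm_kernel_diff_quotient_le) auto
  qed (use integrable_weight in auto)
  moreover have "\<forall>\<^sub>F y in at w within ball w r.
      integral\<^sup>L \<mu> (\<lambda>s. (kernel y s - kernel w s) / (y - w))
      = (integral\<^sup>L \<mu> (kernel y) - integral\<^sup>L \<mu> (kernel w)) / (y - w)"
    unfolding eventually_at_filter
  proof (intro always_eventually allI impI)
    fix y assume "y \<in> ball w r"
    then have "integrable \<mu> (kernel y)" "integrable \<mu> (kernel w)"
      using r Re_ge w by (auto intro!: integrable_kernel order.trans[OF less_imp_le[OF r]])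
    then show "integral\<^sup>L \<mu> (\<lambda>s. (kernel y s - kernel w s) / (y - w))
      = (integral\<^sup>L \<mu> (kernel y) - integral\<^sup>L \<mu> (kernel w)) / (y - w)"
      by simp
  qed
  ultimately have "((\<lambda>y. (integral\<^sup>L \<mu> (kernel y) - integral\<^sup>L \<mu> (kernel w)) / (y - w))
      \<longlongrightarrow> integral\<^sup>L \<mu> (kernel' w)) (at w within ball w r)"
    by (rule Lim_transform_eventually)
  moreover have "at w within ball w r = at w"
    using r by (intro at_within_open) auto
  ultimately show ?thesis
    by (simp add: has_field_derivative_iff)
qed

lemma has_field_derivative_F: "0 < Re w \<Longrightarrow> (F has_field_derivative F' w) (at w)"
  unfolding F_def[abs_def] F'_def
  by (auto intro!: derivative_eq_intros has_field_derivative_integral_kernel)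

lemma F_holomorphic: "F holomorphic_on {z. 0 < Re z}"
  using has_field_derivative_F
  by (auto simp: holomorphic_on_def field_differentiable_def intro: has_field_derivative_at_within)

lemma continuous_on_F': "continuous_on {z. 0 < Re z} F'"
proof -
  have "deriv F holomorphic_on {z. 0 < Re z}"
    by (rule holomorphic_deriv[OF F_holomorphic]) (simp add: open_halfspace_Re_gt)
  then have "continuous_on {z. 0 < Re z} (deriv F)"
    by (rule holomorphic_on_imp_continuous_on)
  moreover have "deriv F z = F' z" if "z \<in> {z. 0 < Re z}" for z
    using has_field_derivative_F that by (auto intro: DERIV_imp_deriv)
  ultimately show ?thesis using continuous_on_cong by blast
qed

lemma Re_kernel: "Re (kernel w s) = indicator {0<..} s * (1 - exp (- (Re w * s)) * cos (Im w * s))"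
  by (simp add: kernel_def Re_exp)

lemma Re_F: "0 \<le> Re w \<Longrightarrow> Re (F w) = a + b * Re w + (\<integral>s. Re (kernel w s) \<partial>\<mu>)"
  by (simp add: F_def integrable_kernel)

lemma integrable_Re_kernel: "0 \<le> Re w \<Longrightarrow> integrable \<mu> (\<lambda>s. Re (kernel w s))"
  using integrable_kernel by auto

lemma Fr_le_Re_F:
  assumes "0 < Re w"
  shows "Fr (Re w) \<le> Re (F w)"
proof -
  have "(\<integral>s. Re (kernel (of_real (Re w)) s) \<partial>\<mu>) \<le> (\<integral>s. Re (kernel w s) \<partial>\<mu>)"
  proof (rule integral_mono)
    fix s
    have "exp (- (Re w * s)) * cos (Im w * s) \<le> exp (- (Re w * s)) * 1"
      by (rule mult_left_mono) auto
    then show "Re (kernel (of_real (Re w)) s) \<le> Re (kernel w s)"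
      by (auto simp: Re_kernel indicator_def)
  qed (use assms in \<open>auto intro: integrable_Re_kernel\<close>)
  then show ?thesis using assms by (simp add: Fr_def Re_F)
qed

lemma Fr_mono:
  assumes "0 < t" "t \<le> t'"
  shows "Fr t \<le> Fr t'"
proof -
  have "(\<integral>s. Re (kernel (of_real t) s) \<partial>\<mu>) \<le> (\<integral>s. Re (kernel (of_real t') s) \<partial>\<mu>)"
    using assms
    by (intro integral_mono integrable_Re_kernel)
      (auto simp: Re_kernel indicator_def intro!: mult_right_mono)
  moreover have "b * t \<le> b * t'" using assms b_nonneg by (intro mult_left_mono) auto
  ultimately show ?thesis using assms by (simp add: Fr_def Re_F)
qed

lemma norm_F'_le:
  assumes "0 < Re w"
  shows "norm (F' w) \<le> Fr' (Re w)"
proof -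
  have "norm (integral\<^sup>L \<mu> (kernel' w)) \<le> (\<integral>s. norm (kernel' w s) \<partial>\<mu>)"
    by (rule integral_norm_bound)
  also have "\<dots> = (\<integral>s. Re (kernel' (of_real (Re w)) s) \<partial>\<mu>)"
  proof -
    have "norm (kernel' w s) = Re (kernel' (of_real (Re w)) s)" for s
      by (simp add: kernel'_def norm_mult norm_exp_eq_Re indicator_def Re_exp)
    then show ?thesis by simp
  qed
  also have "\<dots> = Re (integral\<^sup>L \<mu> (kernel' (of_real (Re w))))"
    using assms by (simp add: integrable_kernel')
  finally have "norm (integral\<^sup>L \<mu> (kernel' w)) \<le> Re (integral\<^sup>L \<mu> (kernel' (of_real (Re w))))" .
  moreover have "norm (F' w) \<le> b + norm (integral\<^sup>L \<mu> (kernel' w))"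
    unfolding F'_def using b_nonneg by (metis abs_of_nonneg norm_of_real norm_triangle_ineq)
  ultimately show ?thesis by (simp add: Fr'_def F'_def)
qed

lemma Fr'_nonneg: "0 < t \<Longrightarrow> 0 \<le> Fr' t"
  using order_trans[OF norm_ge_zero norm_F'_le[of "of_real t"]] by simp

lemma Fr'_antimono:
  assumes "0 < t" "t \<le> t'"
  shows "Fr' t' \<le> Fr' t"
proof -
  have "(\<integral>s. Re (kernel' (of_real t') s) \<partial>\<mu>) \<le> (\<integral>s. Re (kernel' (of_real t) s) \<partial>\<mu>)"
  proof (rule integral_mono)
    fix s
    show "Re (kernel' (of_real t') s) \<le> Re (kernel' (of_real t) s)"
    proof (cases "0 < s")
      case True
      then have "exp (- (t' * s)) \<le> exp (- (t * s))"
        using assms by (simp add: mult_right_mono)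
      then show ?thesis using mult_left_mono[of _ _ s] True by (simp add: kernel'_def Re_exp)
    qed (simp add: kernel'_def)
  qed (use assms integrable_kernel' in auto)
  then show ?thesis using assms integrable_kernel' by (simp add: Fr'_def F'_def)
qed

lemma has_real_derivative_Fr: "0 < t \<Longrightarrow> (Fr has_real_derivative Fr' t) (at t)"
  unfolding Fr_def[abs_def] Fr'_def
  by (intro has_field_derivative_Re has_vector_derivative_real_field) (simp add: has_field_derivative_F)

lemma continuous_on_Fr': "continuous_on {0<..} Fr'"
  unfolding Fr'_def[abs_def]
  by (intro continuous_intros continuous_on_compose2[OF continuous_on_F']) auto

lemma F_in_closed_sector:
  assumes "w \<in> closed_sector \<phi>" "0 < Re w" "0 \<le> cos \<phi>" "0 \<le> sin \<phi>"
  shows "F w \<in> closed_sector \<phi>"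
proof -
  have "kernel w s \<in> closed_sector \<phi>" for s
  proof (cases "0 < s")
    case True
    then have "w * of_real s \<in> closed_sector \<phi>"
      using of_real_mult_in_closed_sector[OF _ assms(1), of s] by (simp add: mult.commute)
    then show ?thesis using True assms by (simp add: kernel_def one_minus_exp_in_closed_sector)
  qed (simp add: kernel_def closed_sector_def)
  then have "integral\<^sup>L \<mu> (kernel w) \<in> closed_sector \<phi>"
    using assms by (intro integral_in_closed_sector integrable_kernel) auto
  then show ?thesis
    unfolding F_def using assms a_nonneg b_nonneg
    by (intro add_in_closed_sector of_real_in_closed_sector of_real_mult_in_closed_sector)
qed

text \<open>Unless \<open>F\<close> vanishes identically, \<open>a\<close>, \<open>b\<close> or \<open>\<mu>(0,\<infinity>)\<close> is positive, and then so is \<open>Fr\<close>.\<close>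
lemma Fr_pos_or_F_eq_0: "(\<forall>t>0. 0 < Fr t) \<or> (\<forall>w. 0 < Re w \<longrightarrow> F w = 0)"
proof (cases "\<forall>t>0. 0 < Fr t")
  case False
  then obtain t where t: "0 < t" "Fr t \<le> 0" by (auto simp: not_less)
  define k where "k = (\<lambda>s. Re (kernel (of_real t) s))"
  have k_nonneg: "0 \<le> k s" for s using t by (auto simp: k_def Re_kernel indicator_def)
  have "0 \<le> integral\<^sup>L \<mu> k" by (intro integral_nonneg_AE AE_I2 k_nonneg)
  moreover have "0 \<le> b * t" using b_nonneg t by simp
  moreover have "Fr t = a + b * t + integral\<^sup>L \<mu> k" using t by (simp add: Fr_def Re_F k_def)
  ultimately have "a = 0" and "b * t = 0" and k_int: "integral\<^sup>L \<mu> k = 0"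
    using t a_nonneg by linarith+
  then have "b = 0" using t by simp
  have "AE s in \<mu>. k s = 0"
    using k_int integral_nonneg_eq_0_iff_AE[of \<mu> k] k_nonneg t by (simp add: k_def integrable_Re_kernel)
  then have "AE s in \<mu>. s \<le> 0"
    by eventually_elim (use t in \<open>auto simp: k_def Re_kernel indicator_def split: if_splits\<close>)
  then have "integral\<^sup>L \<mu> (kernel w) = 0" for w
    by (intro integral_eq_zero_AE) (auto simp: kernel_def)
  then have "F w = 0" for w
    unfolding F_def using \<open>a = 0\<close> \<open>b = 0\<close> by simp
  then show ?thesis by simp
qed simp

end

lemma nn_integral_Ioi_le_of_Icc:
  fixes v :: "real \<Rightarrow> ennreal"
  assumes [measurable]: "v \<in> borel_measurable borel"
    and Icc: "\<And>a b. 0 < a \<Longrightarrow> a \<le> b \<Longrightarrow> (\<integral>\<^sup>+x. v x * indicator {a..b} x \<partial>lborel) \<le> M"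
  shows "(\<integral>\<^sup>+x. v x * indicator {0<..} x \<partial>lborel) \<le> M"
proof -
  define S where "S n = {1 / real (Suc n) .. real (Suc n)}" for n
  have S_sets [measurable]: "S n \<in> sets borel" for n
    by (simp add: S_def)
  have "incseq S"
  proof (rule incseq_SucI)
    fix n
    have "1 / real (Suc (Suc n)) \<le> 1 / real (Suc n)" by (intro divide_left_mono) auto
    then show "S n \<subseteq> S (Suc n)" by (auto simp: S_def)
  qed
  have "{0<..} \<subseteq> (\<Union>n. S n)"
  proof
    fix x :: real assume "x \<in> {0<..}"
    obtain N :: nat where "max x (1 / x) \<le> real N" using real_arch_simple by blast
    with \<open>x \<in> {0<..}\<close> have "x \<in> S N" by (auto simp: S_def field_simps)
    then show "x \<in> (\<Union>n. S n)" by blast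
  qed
  moreover have "S n \<subseteq> {0<..}" for n
    by (auto simp: S_def intro: less_le_trans[of 0 "1 / real (Suc n)"])
  ultimately have "(\<Union>n. S n) = {0<..}" by blast
  then have "(\<integral>\<^sup>+x. v x * indicator {0<..} x \<partial>lborel) = emeasure (density lborel v) (\<Union>n. S n)"
    by (simp add: emeasure_density)
  also have "\<dots> = (SUP n. emeasure (density lborel v) (S n))"
    using \<open>incseq S\<close> by (intro SUP_emeasure_incseq[symmetric]) auto
  also have "\<dots> \<le> M"
  proof (rule SUP_least)
    fix n
    have "1 / real (Suc n) \<le> real (Suc n)" by (rule order_trans[of _ 1]) auto
    then show "emeasure (density lborel v) (S n) \<le> M"
      using Icc[of "1 / real (Suc n)" "real (Suc n)"] by (simp add: emeasure_density S_def)
  qed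
  finally show ?thesis .
qed

lemma nn_integral_Ioi_le_of_deriv:
  fixes Q u :: "real \<Rightarrow> real"
  assumes deriv: "\<And>x. 0 < x \<Longrightarrow> (Q has_real_derivative u x) (at x)"
    and u_nonneg: "\<And>x. 0 < x \<Longrightarrow> 0 \<le> u x"
    and u_cont: "continuous_on {0<..} u"
    and Q_bounds: "\<And>x. 0 < x \<Longrightarrow> 0 \<le> Q x \<and> Q x \<le> M"
  shows "(\<integral>\<^sup>+x. ennreal (indicator {0<..} x * u x) \<partial>lborel) \<le> ennreal M"
proof -
  define v where "v x = ennreal (indicator {0<..} x * u x)" for x
  have "(\<lambda>x. indicator {0<..} x *\<^sub>R u x) \<in> borel_measurable borel"
    using u_cont by (intro borel_measurable_continuous_on_indicator) auto
  then have "v \<in> borel_measurable borel"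
    using measurable_compose[OF _ measurable_ennreal] by (simp add: v_def[abs_def])
  then have "(\<integral>\<^sup>+x. v x * indicator {0<..} x \<partial>lborel) \<le> ennreal M"
  proof (rule nn_integral_Ioi_le_of_Icc)
    fix a b :: real assume ab: "0 < a" "a \<le> b"
    have "(u has_integral Q b - Q a) {a..b}"
    proof (rule fundamental_theorem_of_calculus[OF ab(2)])
      fix x assume "x \<in> {a..b}"
      then have "0 < x" using ab by auto
      then show "(Q has_vector_derivative u x) (at x within {a..b})"
        using has_field_derivative_at_within[OF deriv]
        by (simp add: has_real_derivative_iff_has_vector_derivative[symmetric])
    qed
    then have "(\<integral>\<^sup>+x. ennreal (u x) * indicator {a..b} x \<partial>lborel) = ennreal (Q b - Q a)"
      using ab u_nonneg by (intro nn_integral_has_integral_lebesgue') auto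
    moreover have "(\<integral>\<^sup>+x. v x * indicator {a..b} x \<partial>lborel)
        = (\<integral>\<^sup>+x. ennreal (u x) * indicator {a..b} x \<partial>lborel)"
      using ab by (intro nn_integral_cong) (auto simp: v_def indicator_def)
    moreover have "Q b - Q a \<le> M"
      using Q_bounds[of a] Q_bounds[of b] ab by simp
    ultimately show "(\<integral>\<^sup>+x. v x * indicator {a..b} x \<partial>lborel) \<le> ennreal M"
      by (simp add: ennreal_leI)
  qed
  moreover have "(\<integral>\<^sup>+x. v x * indicator {0<..} x \<partial>lborel) = (\<integral>\<^sup>+x. v x \<partial>lborel)"
    by (intro nn_integral_cong) (simp add: v_def indicator_def)
  ultimately show ?thesis by (simp add: v_def)
qed

lemma has_real_derivative_mult_powr_neg_inverse:
  fixes L \<beta> t :: real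
  assumes L: "0 < L" and \<beta>: "0 < \<beta>" and t: "0 < t"
  shows "((\<lambda>t. t * (L + t powr \<beta>) powr (-1/\<beta>)) has_real_derivative
           L * (L + t powr \<beta>) powr (-1 - 1/\<beta>)) (at t)"
proof -
  define P where "P = L + t powr \<beta>"
  have P: "0 < P" unfolding P_def using L by (intro add_pos_nonneg) auto
  have "((\<lambda>t. L + t powr \<beta>) has_real_derivative 0 + \<beta> * t powr (\<beta> - 1)) (at t)"
    by (intro DERIV_add DERIV_const has_real_derivative_powr t)
  moreover have "-1/\<beta> - of_nat 1 = -1 - 1/\<beta>" by simp
  ultimately have "((\<lambda>t. (L + t powr \<beta>) powr (-1/\<beta>)) has_real_derivative
      (-1/\<beta>) * P powr (-1 - 1/\<beta>) * (0 + \<beta> * t powr (\<beta> - 1))) (at t)"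
    using DERIV_fun_powr[of "\<lambda>t. L + t powr \<beta>" _ t "-1/\<beta>"] P by (simp only: P_def)
  from DERIV_mult[OF DERIV_ident this]
  have "((\<lambda>t. t * (L + t powr \<beta>) powr (-1/\<beta>)) has_real_derivative
      1 * P powr (-1/\<beta>) + (-1/\<beta>) * P powr (-1 - 1/\<beta>) * (0 + \<beta> * t powr (\<beta> - 1)) * t) (at t)"
    by (simp only: P_def)
  moreover have "1 * P powr (-1/\<beta>) + (-1/\<beta>) * P powr (-1 - 1/\<beta>) * (0 + \<beta> * t powr (\<beta> - 1)) * t
      = L * P powr (-1 - 1/\<beta>)"
  proof -
    have "P powr (-1/\<beta>) = P * P powr (-1 - 1/\<beta>)"
      using P powr_add[of P 1 "-1 - 1/\<beta>"] by simp
    then have "1 * P powr (-1/\<beta>) + (-1/\<beta>) * P powr (-1 - 1/\<beta>) * (0 + \<beta> * t powr (\<beta> - 1)) * t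
        = P powr (-1 - 1/\<beta>) * (P - t * t powr (\<beta> - 1))"
      using \<beta> by (simp add: field_simps)
    also have "t * t powr (\<beta> - 1) = t powr \<beta>"
      using t powr_add[of t 1 "\<beta> - 1"] by simp
    also have "P - t powr \<beta> = L" by (simp add: P_def)
    finally show ?thesis by (simp only: mult.commute)
  qed
  ultimately show ?thesis by (simp add: P_def)
qed

lemma mult_powr_neg_inverse_le_1:
  fixes L \<beta> t :: real
  assumes "0 \<le> t" "0 < L" "0 < \<beta>"
  shows "t * (L + t powr \<beta>) powr (-1/\<beta>) \<le> 1"
proof -
  have "t = (t powr \<beta>) powr (1/\<beta>)" using assms by (simp add: powr_powr)
  also have "\<dots> \<le> (L + t powr \<beta>) powr (1/\<beta>)" using assms by (intro powr_mono2) auto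
  finally have "t \<le> (L + t powr \<beta>) powr (1/\<beta>)" .
  moreover have "(L + t powr \<beta>) powr (-1/\<beta>) = 1 / (L + t powr \<beta>) powr (1/\<beta>)"
    by (metis minus_divide_left powr_minus_divide)
  moreover have "0 < L + t powr \<beta>" using assms by (simp add: add_pos_nonneg)
  ultimately show ?thesis by (simp add: divide_le_eq)
qed

lemma powr_div_square_le:
  fixes s T L \<beta> :: real
  assumes "0 < T" "T \<le> s" "0 < L" "1 < \<beta>"
  shows "s powr (\<beta> - 1) / (L + s powr \<beta>)\<^sup>2 \<le> (L + T powr \<beta>) powr (-1 - 1/\<beta>)"
proof -
  define P where "P = L + s powr \<beta>"
  have P: "0 < P" using assms by (simp add: P_def add_pos_nonneg)
  have "s powr (\<beta> - 1) = (s powr \<beta>) powr ((\<beta> - 1) / \<beta>)"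
    using assms by (simp add: powr_powr)
  also have "\<dots> \<le> P powr ((\<beta> - 1) / \<beta>)"
    using assms by (intro powr_mono2) (auto simp: P_def)
  finally have "s powr (\<beta> - 1) / P\<^sup>2 \<le> P powr ((\<beta> - 1) / \<beta>) / P powr 2"
    using P by (simp add: divide_right_mono)
  also have "\<dots> = P powr (-1 - 1/\<beta>)"
  proof -
    have "(\<beta> - 1) / \<beta> - 2 = -1 - 1/\<beta>"
      using assms by (simp add: field_simps)
    then show ?thesis by (metis powr_diff)
  qed
  also have "\<dots> \<le> (L + T powr \<beta>) powr (-1 - 1/\<beta>)"
    using assms by (intro powr_mono2') (auto simp: P_def add_pos_nonneg field_simps intro: powr_mono2)
  finally show ?thesis by (simp add: P_def)
qed

section \<open>The space \<open>B\<close>\<close>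

lemma B_int_le_of_norm_deriv_le:
  fixes h :: "complex \<Rightarrow> complex" and v :: "real \<Rightarrow> real"
  assumes "\<And>x y. 0 < x \<Longrightarrow> norm (deriv h (Complex x y)) \<le> v x"
    and "(\<integral>\<^sup>+x. ennreal (indicator {0<..} x * v x) \<partial>lborel) \<le> ennreal M"
  shows "B_int h \<le> ennreal M"
proof -
  have "(SUP y. ennreal (norm (deriv h (Complex x y)))) * indicator {0<..} x
      \<le> ennreal (indicator {0<..} x * v x)" for x
  proof (cases "0 < x")
    case True
    have "(SUP y. ennreal (norm (deriv h (Complex x y)))) \<le> ennreal (v x)"
      by (rule SUP_least) (auto intro!: ennreal_leI assms(1) True)
    then show ?thesis using True by simp
  qed simp
  then have "B_int h \<le> (\<integral>\<^sup>+x. ennreal (indicator {0<..} x * v x) \<partial>lborel)"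
    unfolding B_int_def by (rule nn_integral_mono)
  also have "\<dots> \<le> ennreal M" by fact
  finally show ?thesis .
qed

lemma in_B_and_B_norm_le:
  fixes h h' :: "complex \<Rightarrow> complex"
  assumes "\<And>z. 0 < Re z \<Longrightarrow> (h has_field_derivative h' z) (at z)"
    and "\<And>z. 0 < Re z \<Longrightarrow> norm (h z) \<le> M\<^sub>1"
    and "B_int h \<le> ennreal M\<^sub>2" and "0 \<le> M\<^sub>1" "0 \<le> M\<^sub>2" "M\<^sub>1 + M\<^sub>2 \<le> C"
  shows "in_B h \<and> B_norm h \<le> ennreal C"
proof
  have "h holomorphic_on {z. 0 < Re z}"
    using assms(1)
    by (auto simp: holomorphic_on_def field_differentiable_def intro: has_field_derivative_at_within)
  with assms(3) show "in_B h" by (simp add: in_B_def le_less_trans)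
  have "(SUP z\<in>{z. 0 < Re z}. ennreal (norm (h z))) \<le> ennreal M\<^sub>1"
    by (rule SUP_least) (auto intro!: ennreal_leI assms(2))
  then have "B_norm h \<le> ennreal M\<^sub>1 + ennreal M\<^sub>2"
    unfolding B_norm_def using assms(3) by (rule add_mono)
  also have "\<dots> = ennreal (M\<^sub>1 + M\<^sub>2)"
    using assms(4,5) by simp
  also have "\<dots> \<le> ennreal C"
    using assms(6) by (rule ennreal_leI)
  finally show "B_norm h \<le> ennreal C" .
qed

section \<open>The subordinated resolvent\<close>

locale bernstein_subordination = bernstein_repr +
  fixes \<alpha> \<beta> \<theta> :: real and l :: complex
  assumes alpha_pos: "0 < \<alpha>" and alpha_lt_1: "\<alpha> < 1"
    and beta_gt_1: "1 < \<beta>" and beta_le: "\<beta> \<le> 1 / \<alpha>"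
    and theta_pos: "0 < \<theta>" and theta_lt: "\<theta> < pi / 2"
    and l_nonzero: "l \<noteq> 0" and Arg_l: "\<bar>Arg l\<bar> < \<theta>"
begin

definition \<kappa> :: real where
  "\<kappa> = cos (\<alpha> * pi / 2)"

definition \<gamma> :: real where
  "\<gamma> = \<alpha> * \<beta> * pi / 2"

definition c :: real where
  "c = cos ((\<gamma> + \<theta>) / 2)"

definition R :: "complex \<Rightarrow> complex" where
  "R z = 1 / (l + F (z powr of_real \<alpha>) powr of_real \<beta>)"

definition R' :: "complex \<Rightarrow> complex" where
  "R' z = - (of_real \<beta> * F (z powr of_real \<alpha>) powr (of_real \<beta> - 1)
             * (F' (z powr of_real \<alpha>) * (of_real \<alpha> * z powr (of_real \<alpha> - 1))))
          / (l + F (z powr of_real \<alpha>) powr of_real \<beta>)\<^sup>2"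

lemma alpha_beta_le_1: "\<alpha> * \<beta> \<le> 1"
  using beta_le alpha_pos by (simp add: le_divide_eq mult.commute)

lemma half_alpha_pi: "0 < \<alpha> * pi / 2" "\<alpha> * pi / 2 < pi / 2"
  using alpha_pos alpha_lt_1 by auto

lemma kappa_pos: "0 < \<kappa>"
  unfolding \<kappa>_def using half_alpha_pi by (intro cos_gt_zero) auto

lemma kappa_le_1: "\<kappa> \<le> 1"
  by (simp add: \<kappa>_def)

lemma gamma_bounds: "0 \<le> \<gamma>" "\<gamma> \<le> pi / 2"
  using alpha_pos beta_gt_1 mult_right_mono[OF alpha_beta_le_1, of "pi / 2"] by (auto simp: \<gamma>_def)

lemma gamma_lt_pi: "\<gamma> < pi"
  using gamma_bounds(2) pi_gt_zero by linarith

lemma c_pos: "0 < c"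
  unfolding c_def using gamma_bounds theta_pos theta_lt by (intro cos_gt_zero) auto

lemma c_le_1: "c \<le> 1"
  by (simp add: c_def)

lemma Re_powr_alpha_ge: "0 < Re z \<Longrightarrow> \<kappa> * Re z powr \<alpha> \<le> Re (z powr of_real \<alpha>)"
  unfolding \<kappa>_def using alpha_pos alpha_lt_1 by (intro Re_powr_ge) auto

lemma Re_powr_alpha_pos: "0 < Re z \<Longrightarrow> 0 < Re (z powr of_real \<alpha>)"
proof -
  assume z: "0 < Re z"
  then have "0 < \<kappa> * Re z powr \<alpha>" using kappa_pos by simp
  with Re_powr_alpha_ge[OF z] show ?thesis by linarith
qed

lemma F_powr_alpha_in_closed_sector:
  assumes z: "0 < Re z"
  shows "F (z powr of_real \<alpha>) \<in> closed_sector (\<alpha> * pi / 2)"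
proof (rule F_in_closed_sector)
  have "z powr of_real \<alpha> \<noteq> 0" using Re_powr_alpha_pos[OF z] by auto
  moreover have "\<bar>Arg (z powr of_real \<alpha>)\<bar> \<le> \<alpha> * pi / 2"
    using z alpha_pos alpha_lt_1 by (intro abs_Arg_powr_le) auto
  ultimately show "z powr of_real \<alpha> \<in> closed_sector (\<alpha> * pi / 2)"
    using half_alpha_pi by (subst in_closed_sector_iff_Arg) auto
  show "0 \<le> cos (\<alpha> * pi / 2)" "0 \<le> sin (\<alpha> * pi / 2)"
    using half_alpha_pi by (intro cos_ge_zero sin_ge_zero; linarith)+
qed (rule Re_powr_alpha_pos[OF z])

lemma norm_l_add_F_powr_ge:
  assumes z: "0 < Re z"
  shows "c * (cmod l + norm (F (z powr of_real \<alpha>)) powr \<beta>)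
    \<le> norm (l + F (z powr of_real \<alpha>) powr of_real \<beta>)"
proof -
  define W where "W = F (z powr of_real \<alpha>)"
  have "\<bar>Arg (W powr of_real \<beta>)\<bar> \<le> \<gamma>"
  proof (cases "W = 0")
    case False
    then have "\<bar>Arg W\<bar> \<le> \<alpha> * pi / 2"
      using F_powr_alpha_in_closed_sector[OF z] half_alpha_pi
      by (subst (asm) in_closed_sector_iff_Arg) (auto simp: W_def)
    then have "\<bar>\<beta> * Arg W\<bar> \<le> \<gamma>"
      using beta_gt_1 mult_left_mono[of "\<bar>Arg W\<bar>" "\<alpha> * pi / 2" \<beta>] by (simp add: abs_mult \<gamma>_def)
    moreover have "Arg (W powr of_real \<beta>) = \<beta> * Arg W"
      using False \<open>\<bar>\<beta> * Arg W\<bar> \<le> \<gamma>\<close> gamma_lt_pi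
      unfolding abs_le_iff by (intro Arg_powr_of_real) auto
    ultimately show ?thesis by simp
  qed (use gamma_bounds in \<open>simp add: Arg_zero\<close>)
  moreover have "\<bar>Arg l\<bar> \<le> \<theta>" using Arg_l by simp
  ultimately have "cos ((\<theta> + \<gamma>) / 2) * (cmod l + norm (W powr of_real \<beta>))
      \<le> norm (l + W powr of_real \<beta>)"
    using gamma_bounds theta_pos theta_lt by (intro norm_add_ge_cos_half_angle) auto
  then show ?thesis
    by (simp add: c_def W_def add.commute norm_powr_real_powr')
qed

lemma norm_R'_eq:
  "norm (R' z) = \<beta> * \<alpha> * norm (F' (z powr of_real \<alpha>)) * norm (z powr (of_real \<alpha> - 1))
      * norm (F (z powr of_real \<alpha>)) powr (\<beta> - 1)
      / (norm (l + F (z powr of_real \<alpha>) powr of_real \<beta>))\<^sup>2"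
proof -
  have "norm (F (z powr of_real \<alpha>) powr (of_real \<beta> - 1)) = norm (F (z powr of_real \<alpha>)) powr (\<beta> - 1)"
    by (subst norm_powr_real_powr') auto
  then show ?thesis
    using alpha_pos beta_gt_1 by (simp add: R'_def norm_mult norm_divide norm_power)
qed

lemma norm_F'_powr_alpha_le:
  assumes z: "0 < Re z"
  shows "norm (F' (z powr of_real \<alpha>)) \<le> Fr' (\<kappa> * Re z powr \<alpha>)"
proof -
  have "0 < \<kappa> * Re z powr \<alpha>" using kappa_pos z by simp
  then show ?thesis
    using norm_F'_le[OF Re_powr_alpha_pos[OF z]] Fr'_antimono Re_powr_alpha_ge[OF z] by force
qed

lemma c_mult_norm_l_le:
  assumes z: "0 < Re z"
  shows "c * cmod l \<le> norm (l + F (z powr of_real \<alpha>) powr of_real \<beta>)"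
proof -
  have "c * cmod l \<le> c * (cmod l + norm (F (z powr of_real \<alpha>)) powr \<beta>)"
    using c_pos by (intro mult_left_mono) auto
  also have "\<dots> \<le> norm (l + F (z powr of_real \<alpha>) powr of_real \<beta>)"
    by (rule norm_l_add_F_powr_ge[OF z])
  finally show ?thesis .
qed

lemma norm_R_le: "0 < Re z \<Longrightarrow> norm (R z) \<le> 1 / (c * cmod l)"
  using c_mult_norm_l_le c_pos l_nonzero by (simp add: R_def norm_divide divide_simps)

end

text \<open>By \<open>Fr_pos_or_F_eq_0\<close>, the only other case is \<open>F = 0\<close>, in which \<open>R\<close> is constant.\<close>
locale bernstein_subordination_pos = bernstein_subordination +
  assumes Fr_pos: "0 < t \<Longrightarrow> 0 < Fr t"
begin

definition Psi :: "real \<Rightarrow> real" where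
  "Psi x = Fr (\<kappa> * x powr \<alpha>)"

definition Psi' :: "real \<Rightarrow> real" where
  "Psi' x = Fr' (\<kappa> * x powr \<alpha>) * (\<kappa> * (\<alpha> * x powr (\<alpha> - 1)))"

definition majorant :: "real \<Rightarrow> real" where
  "majorant x = \<beta> / (\<kappa> * c\<^sup>2) * (Psi' x * (cmod l + Psi x powr \<beta>) powr (-1 - 1/\<beta>))"

lemma Psi_pos: "0 < x \<Longrightarrow> 0 < Psi x"
  using kappa_pos by (simp add: Psi_def Fr_pos)

lemma Psi_le_Re_F:
  assumes z: "0 < Re z"
  shows "Psi (Re z) \<le> Re (F (z powr of_real \<alpha>))"
proof -
  have "0 < \<kappa> * Re z powr \<alpha>" using kappa_pos z by simp
  then have "Psi (Re z) \<le> Fr (Re (z powr of_real \<alpha>))"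
    unfolding Psi_def using Re_powr_alpha_ge[OF z] by (rule Fr_mono)
  also have "\<dots> \<le> Re (F (z powr of_real \<alpha>))"
    using Re_powr_alpha_pos[OF z] by (rule Fr_le_Re_F)
  finally show ?thesis .
qed

lemma Re_F_powr_alpha_pos: "0 < Re z \<Longrightarrow> 0 < Re (F (z powr of_real \<alpha>))"
  using Psi_le_Re_F Psi_pos by (meson less_le_trans)

lemma has_field_derivative_R_pos:
  assumes z: "0 < Re z"
  shows "(R has_field_derivative R' z) (at z)"
proof -
  define Z where "Z = z powr of_real \<alpha>"
  have "F Z \<notin> \<real>\<^sub>\<le>\<^sub>0"
    using Re_F_powr_alpha_pos[OF z] by (auto simp: Z_def complex_nonpos_Reals_iff)
  moreover have "z \<notin> \<real>\<^sub>\<le>\<^sub>0"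
    using z by (auto simp: complex_nonpos_Reals_iff)
  moreover have "0 < c * cmod l"
    using c_pos l_nonzero by simp
  then have "l + F Z powr of_real \<beta> \<noteq> 0"
    using c_mult_norm_l_le[OF z] by (auto simp: Z_def)
  moreover have "0 < Re Z"
    using Re_powr_alpha_pos[OF z] by (simp add: Z_def)
  ultimately show ?thesis
    unfolding R_def[abs_def] R'_def Z_def[symmetric]
    by (auto intro!: derivative_eq_intros has_field_derivative_F[THEN DERIV_chain2]
        simp: Z_def power2_eq_square)
qed

lemma norm_R'_le:
  assumes z: "0 < Re z"
  shows "norm (R' z) \<le> majorant (Re z)"
proof -
  define x Z W where "x = Re z" and "Z = z powr of_real \<alpha>" and "W = F Z"
  define L where "L = cmod l"
  have x: "0 < x" using z by (simp add: x_def)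
  have \<kappa>x: "0 < \<kappa> * x powr \<alpha>" using kappa_pos x by simp
  have Re_Z: "\<kappa> * x powr \<alpha> \<le> Re Z" using Re_powr_alpha_ge[OF z] by (simp add: x_def Z_def)
  have Psi_W: "Psi x \<le> norm W"
    using Psi_le_Re_F[OF z] complex_Re_le_cmod[of W] by (simp add: x_def Z_def W_def)
  have L: "0 < L" using l_nonzero by (simp add: L_def)
  have F'_le: "norm (F' Z) \<le> Fr' (\<kappa> * x powr \<alpha>)"
    using norm_F'_powr_alpha_le[OF z] by (simp add: x_def Z_def)
  have pow_le: "norm (z powr (of_real \<alpha> - 1)) \<le> x powr (\<alpha> - 1)"
    using norm_powr_le_Re_powr[OF z] alpha_lt_1 by (simp add: x_def)
  have denom: "c\<^sup>2 * (L + norm W powr \<beta>)\<^sup>2 \<le> (norm (l + W powr of_real \<beta>))\<^sup>2"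
    using norm_l_add_F_powr_ge[OF z] c_pos L
    by (simp add: power_mult_distrib[symmetric] L_def W_def Z_def power_mono)
  have "0 < L + norm W powr \<beta>"
    using L by (simp add: add_pos_nonneg)
  then have denom_pos: "0 < c\<^sup>2 * (L + norm W powr \<beta>)\<^sup>2"
    using c_pos by simp
  have "norm (R' z) \<le> \<beta> * \<alpha> * Fr' (\<kappa> * x powr \<alpha>) * x powr (\<alpha> - 1) * norm W powr (\<beta> - 1)
      / (c\<^sup>2 * (L + norm W powr \<beta>)\<^sup>2)"
    unfolding norm_R'_eq Z_def[symmetric] W_def[symmetric]
  proof (rule frac_le)
    show "\<beta> * \<alpha> * norm (F' Z) * norm (z powr (of_real \<alpha> - 1)) * norm W powr (\<beta> - 1)
        \<le> \<beta> * \<alpha> * Fr' (\<kappa> * x powr \<alpha>) * x powr (\<alpha> - 1) * norm W powr (\<beta> - 1)"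
      using alpha_pos beta_gt_1 F'_le pow_le Fr'_nonneg[OF \<kappa>x]
      by (intro mult_right_mono mult_left_mono mult_mono) auto
  qed (use alpha_pos beta_gt_1 Fr'_nonneg[OF \<kappa>x] denom denom_pos in auto)
  also have "\<dots> = \<beta> * \<alpha> * Fr' (\<kappa> * x powr \<alpha>) * x powr (\<alpha> - 1) / c\<^sup>2
      * (norm W powr (\<beta> - 1) / (L + norm W powr \<beta>)\<^sup>2)"
    by simp
  also have "\<dots> \<le> \<beta> * \<alpha> * Fr' (\<kappa> * x powr \<alpha>) * x powr (\<alpha> - 1) / c\<^sup>2
      * (L + Psi x powr \<beta>) powr (-1 - 1/\<beta>)"
    using powr_div_square_le[OF Psi_pos[OF x] Psi_W L beta_gt_1] alpha_pos beta_gt_1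
      Fr'_nonneg[OF \<kappa>x]
    by (intro mult_left_mono) auto
  also have "\<dots> = majorant x"
    using kappa_pos by (simp add: majorant_def Psi'_def L_def)
  finally show ?thesis by (simp add: x_def)
qed

lemma has_real_derivative_Psi: "0 < x \<Longrightarrow> (Psi has_real_derivative Psi' x) (at x)"
  unfolding Psi_def[abs_def] Psi'_def
  using kappa_pos
  by (auto intro!: DERIV_chain2[OF has_real_derivative_Fr] DERIV_cmult has_real_derivative_powr)

lemma Psi'_nonneg: "0 < x \<Longrightarrow> 0 \<le> Psi' x"
  using kappa_pos alpha_pos Fr'_nonneg[of "\<kappa> * x powr \<alpha>"] by (simp add: Psi'_def)

lemma continuous_on_Psi: "continuous_on {0<..} Psi"
  using has_real_derivative_Psi
  by (intro DERIV_continuous_on[where D = Psi']) (auto intro: has_field_derivative_at_within)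

lemma continuous_on_Psi': "continuous_on {0<..} Psi'"
proof -
  have "continuous_on {0<..} (\<lambda>x. Fr' (\<kappa> * x powr \<alpha>))"
    using kappa_pos
    by (intro continuous_on_compose2[OF continuous_on_Fr']) (auto intro!: continuous_intros)
  then show ?thesis
    unfolding Psi'_def[abs_def] by (auto intro!: continuous_intros)
qed

lemma nn_integral_majorant_le:
  "(\<integral>\<^sup>+x. ennreal (indicator {0<..} x * majorant x) \<partial>lborel)
    \<le> ennreal (\<beta> / (\<kappa> * c\<^sup>2) / cmod l)"
proof (rule nn_integral_Ioi_le_of_deriv)
  define L where "L = cmod l"
  have L: "0 < L" using l_nonzero by (simp add: L_def)
  define K where "K = \<beta> / (\<kappa> * c\<^sup>2)"
  have K: "0 < K" using beta_gt_1 kappa_pos c_pos by (simp add: K_def)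
  let ?Q = "\<lambda>x. K / L * (Psi x * (L + Psi x powr \<beta>) powr (-1/\<beta>))"
  show "(?Q has_real_derivative majorant x) (at x)" if "0 < x" for x
  proof -
    have "((\<lambda>x. Psi x * (L + Psi x powr \<beta>) powr (-1/\<beta>)) has_real_derivative
        L * (L + Psi x powr \<beta>) powr (-1 - 1/\<beta>) * Psi' x) (at x)"
      using DERIV_chain2[OF has_real_derivative_mult_powr_neg_inverse[OF L _ Psi_pos[OF that]]
          has_real_derivative_Psi[OF that]] beta_gt_1
      by simp
    from DERIV_cmult[OF this, of "K / L"]
    have "(?Q has_real_derivative K / L * (L * (L + Psi x powr \<beta>) powr (-1 - 1/\<beta>) * Psi' x)) (at x)" .
    moreover have "K / L * (L * (L + Psi x powr \<beta>) powr (-1 - 1/\<beta>) * Psi' x) = majorant x"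
      using L by (simp add: majorant_def K_def L_def)
    ultimately show ?thesis by simp
  qed
  show "0 \<le> majorant x" if "0 < x" for x
    using that Psi'_nonneg beta_gt_1 kappa_pos by (simp add: majorant_def)
  have "L + Psi x powr \<beta> \<noteq> 0" for x
    using L add_pos_nonneg[of L "Psi x powr \<beta>"] by simp
  moreover have "Psi x \<noteq> 0" if "0 < x" for x
    using Psi_pos[OF that] by simp
  ultimately show "continuous_on {0<..} majorant"
    unfolding majorant_def[abs_def] L_def[symmetric]
    by (intro continuous_intros continuous_on_Psi continuous_on_Psi') auto
  show "0 \<le> ?Q x \<and> ?Q x \<le> \<beta> / (\<kappa> * c\<^sup>2) / cmod l" if "0 < x" for x
  proof -
    have "Psi x * (L + Psi x powr \<beta>) powr (-1/\<beta>) \<le> 1"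
      using mult_powr_neg_inverse_le_1[of "Psi x" L \<beta>] Psi_pos[OF that] L beta_gt_1 by simp
    then have "?Q x \<le> K / L * 1"
      using K L by (intro mult_left_mono) auto
    moreover have "0 \<le> ?Q x"
      using Psi_pos[OF that] K L by simp
    ultimately show ?thesis by (simp add: K_def L_def)
  qed
qed

end

context bernstein_subordination
begin

lemma R_eq_if_F_eq_0: "F (z powr of_real \<alpha>) = 0 \<Longrightarrow> R z = 1 / l"
  by (simp add: R_def)

lemma R'_eq_0_if_F_eq_0: "F (z powr of_real \<alpha>) = 0 \<Longrightarrow> R' z = 0"
  by (simp add: R'_def)

lemma has_field_derivative_R:
  assumes z: "0 < Re z"
  shows "(R has_field_derivative R' z) (at z)"
proof (cases "\<forall>t>0. 0 < Fr t")
  case True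
  interpret bernstein_subordination_pos a b \<mu> \<alpha> \<beta> \<theta> l
    by unfold_locales (use True in auto)
  show ?thesis by (rule has_field_derivative_R_pos[OF z])
next
  case False
  then have F_0: "F (w powr of_real \<alpha>) = 0" if "0 < Re w" for w
    using Fr_pos_or_F_eq_0 Re_powr_alpha_pos[OF that] by blast
  show ?thesis
  proof (rule has_field_derivative_transform_within_open[OF _ open_halfspace_Re_gt])
    show "((\<lambda>w. 1 / l) has_field_derivative R' z) (at z)"
      using R'_eq_0_if_F_eq_0[OF F_0[OF z]] by simp
    show "1 / l = R w" if "w \<in> {w. 0 < Re w}" for w
      using R_eq_if_F_eq_0[OF F_0] that by simp
  qed (use z in simp)
qed

lemma has_field_derivative_if_eq_R:
  assumes h: "\<And>z. 0 < Re z \<Longrightarrow> h z = R z" and z: "0 < Re z"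
  shows "(h has_field_derivative R' z) (at z)"
proof (rule has_field_derivative_transform_within_open[OF has_field_derivative_R[OF z]])
  show "R w = h w" if "w \<in> {w. 0 < Re w}" for w
    using h that by simp
qed (use z open_halfspace_Re_gt in simp_all)

lemma B_int_le_if_eq_R:
  assumes h: "\<And>z. 0 < Re z \<Longrightarrow> h z = R z"
  shows "B_int h \<le> ennreal (\<beta> / (\<kappa> * c\<^sup>2) / cmod l)"
proof -
  have deriv_h: "deriv h (Complex x y) = R' (Complex x y)" if "0 < x" for x y
    using has_field_derivative_if_eq_R[OF h, of "Complex x y"] that by (simp add: DERIV_imp_deriv)
  show ?thesis
  proof (cases "\<forall>t>0. 0 < Fr t")
    case True
    interpret bernstein_subordination_pos a b \<mu> \<alpha> \<beta> \<theta> l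
      by unfold_locales (use True in auto)
    show ?thesis
    proof (rule B_int_le_of_norm_deriv_le[where v = majorant])
      show "norm (deriv h (Complex x y)) \<le> majorant x" if "0 < x" for x y
        using deriv_h[OF that] norm_R'_le[of "Complex x y"] that by simp
    qed (rule nn_integral_majorant_le)
  next
    case False
    then have "R' (Complex x y) = 0" if "0 < x" for x y
      using Fr_pos_or_F_eq_0 Re_powr_alpha_pos[of "Complex x y"] that R'_eq_0_if_F_eq_0 by auto
    then show ?thesis
      using deriv_h by (intro B_int_le_of_norm_deriv_le[where v = "\<lambda>x. 0"]) auto
  qed
qed

lemma in_B_and_B_norm_le_if_eq_R:
  assumes h: "\<And>z. 0 < Re z \<Longrightarrow> h z = R z"
  shows "in_B h \<and> B_norm h \<le> ennreal (2 * \<beta> / \<kappa> / c\<^sup>2 / cmod l)"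
proof (rule in_B_and_B_norm_le)
  show "(h has_field_derivative R' z) (at z)" if "0 < Re z" for z
    using has_field_derivative_if_eq_R[OF h that] .
  show "norm (h z) \<le> 1 / (c * cmod l)" if "0 < Re z" for z
    using norm_R_le[OF that] h[OF that] by simp
  show "B_int h \<le> ennreal (\<beta> / (\<kappa> * c\<^sup>2) / cmod l)"
    using B_int_le_if_eq_R[OF h] .
  define K where "K = \<beta> / (\<kappa> * c\<^sup>2 * cmod l)"
  have "\<kappa> * c \<le> \<beta>"
    using mult_mono[OF kappa_le_1 c_le_1] kappa_pos c_pos beta_gt_1 by simp
  have "1 / (c * cmod l) = \<kappa> * c / (\<kappa> * c\<^sup>2 * cmod l)"
    using kappa_pos c_pos by (simp add: power2_eq_square)
  also have "\<dots> \<le> K"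
    unfolding K_def using \<open>\<kappa> * c \<le> \<beta>\<close> kappa_pos c_pos l_nonzero
    by (intro divide_right_mono) simp_all
  finally have "1 / (c * cmod l) + K \<le> 2 * K" by simp
  then show "1 / (c * cmod l) + \<beta> / (\<kappa> * c\<^sup>2) / cmod l \<le> 2 * \<beta> / \<kappa> / c\<^sup>2 / cmod l"
    by (simp add: K_def)
qed (use c_pos kappa_pos beta_gt_1 l_nonzero in auto)

end

theorem proposition3p8:
  fixes f :: "complex \<Rightarrow> complex" and \<alpha> \<beta> \<theta> :: real and l :: complex
    and g h :: "complex \<Rightarrow> complex"
  assumes "bernstein f"
    and "0 < \<alpha>" and "\<alpha> < 1"
    and "1 < \<beta>" and "\<beta> \<le> 1 / \<alpha>"
    and "0 < \<theta>" and "\<theta> < pi / 2"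
    and "l \<noteq> 0" and "\<bar>Arg l\<bar> < \<theta>"
    and "\<And>z. g z = (f (z powr complex_of_real \<alpha>)) powr complex_of_real \<beta>"
    and "\<And>z. h z = 1 / (l + g z)"
  shows "in_B h \<and>
         B_norm h \<le> ennreal (2 * \<beta> / cos (\<alpha> * pi / 2)
                              / (cos ((\<alpha> * \<beta> * pi / 2 + \<theta>) / 2))\<^sup>2 / cmod l)"
proof -
  obtain a b \<mu> where repr: "bernstein_repr a b \<mu>"
    and f_eq: "\<And>z. 0 < Re z \<Longrightarrow> f z = complex_of_real a + complex_of_real b * z
               + (LINT s:{0<..}|\<mu>. (1 - exp (- (z * complex_of_real s))))"
    using assms(1) unfolding bernstein_def bernstein_repr_def by blast
  interpret bernstein_subordination a b \<mu> \<alpha> \<beta> \<theta> l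
    using repr assms(2-9) by (simp add: bernstein_subordination_def bernstein_subordination_axioms_def)
  have "h z = R z" if "0 < Re z" for z
    using assms(10,11) f_eq[OF Re_powr_alpha_pos[OF that]] by (simp add: R_def F_eq_set_integral)
  then have "in_B h \<and> B_norm h \<le> ennreal (2 * \<beta> / \<kappa> / c\<^sup>2 / cmod l)"
    by (rule in_B_and_B_norm_le_if_eq_R)
  then show ?thesis
    by (simp add: \<kappa>_def c_def \<gamma>_def)
qed

end
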